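(* Let $J:=\operatorname{conv}\{\mathbf{v}_0,\mathbf{v}_1,\dots,\mathbf{v}_d\}\subset\mathbb{R}^d_{\ge0}\setminus\{\mathbf{0}\}$ be a $d$-simplex, $\mathbf{c}\in\mathbb{R}^d$, and $f(\mathbf{x}):=e^{\mathbf{c}^\top\mathbf{x}}-1$, and suppose $\mathbf{c}^\top\mathbf{v}_0-\mathbf{c}^\top\mathbf{v}_j=u\neq0$ for $j=1,\dots,d$. Then $$\operatorname{vol}(P(f,J))=\frac{d!\operatorname{vol}(J)}{(d+2)!}\bigl(e^{\mathbf{c}^\top\mathbf{v}_0}+de^{\mathbf{c}^\top\mathbf{v}_0-u}\bigr)-\frac{d!\operatorname{vol}(J)}{d+2}\cdot\frac{e^{\mathbf{c}^\top\mathbf{v}_0-u}}{u^d}\left(e^u-\sum_{j=0}^{d-1}\frac{u^j}{j!}\right),$$ and $$\begin{aligned}\operatorname{vol}(P^0(f,J))=&\ \frac{d!\operatorname{vol}(J)}{(d+2)!}\bigl(e^{\mathbf{c}^\top\mathbf{v}_0}+de^{\mathbf{c}^\top\mathbf{v}_0-u}+1\bigr)-d!\operatorname{vol}(J)\frac{e^{\mathbf{c}^\top\mathbf{v}_0-u}}{(\mathbf{c}^\top\mathbf{v}_0)u^d}\left(e^u-\sum_{j=0}^{d-1}\frac{u^j}{j!}\right)\\&+d!\operatorname{vol}(J)\frac{e^{\mathbf{c}^\top\mathbf{v}_0-u}}{(\mathbf{c}^\top\mathbf{v}_0)\,[-(\mathbf{c}^\top\mathbf{v}_0-u)]^d}\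left(e^{-(\mathbf{c}^\top\mathbf{v}_0-u)}-\sum_{j=0}^{d-1}\frac{[-(\mathbf{c}^\top\mathbf{v}_0-u)]^j}{j!}\right).\end{aligned}$$
   Context: $\operatorname{vol}(J)$ is the $d$-dimensional Lebesgue measure of $J$, and $\operatorname{vol}$ of the relaxations is $(d+2)$-dimensional Lebesgue measure. Let $\mu$ be the unique affine function agreeing with $f$ at the vertices of $J$ and $\mu(\mathbf{x},z):=z\mu(\mathbf{x}/z)$ (extended linearly in $(\mathbf{x},z)$). For $z\ge0$, $z\cdot J:=\{z\mathbf{x}:\mathbf{x}\in J\}$. Perspective relaxation: $P(f,J):=\operatorname{cl}\{(\mathbf{x},y,z)\in\mathbb{R}^d\times\mathbb{R}\times\mathbb{R}:\mu(\mathbf{x},z)\ge y\ge zf(\mathbf{x}/z),\ \mathbf{x}\in z\cdot J,\ 1\ge z>0\}$. Naive relaxation: $P^0(f,J):=\{(\mathbf{x},y,z)\in\mathbb{R}^d\times\mathbb{R}\times\mathbb{R}:\mu(\mathbf{x},z)\ge y\ge f(\mathbf{x}),\ \mathbf{x}\in z\cdot J,\ 1\ge z\ge0\}$. *)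

theory Defs
  imports "HOL-Analysis.Analysis"
begin

definition simplex_of :: "(nat \<Rightarrow> real^'n) \<Rightarrow> nat \<Rightarrow> (real^'n) set" where
  "simplex_of v d = convex hull (v ` {0..d})"

definition affine_interp :: "(real^'n \<Rightarrow> real) \<Rightarrow> (nat \<Rightarrow> real^'n) \<Rightarrow> nat \<Rightarrow> real^'n \<Rightarrow> real" where
  "affine_interp f v d = (THE g. (\<exists>a b. g = (\<lambda>x. a \<bullet> x + b)) \<and> (\<forall>i\<in>{0..d}. g (v i) = f (v i)))"

text \<open>Its homogenization mu(x,z) = z mu(x/z), extended linearly in (x,z):
  for mu(x) = a.x + b this is a.x + b z.\<close>
definition homog :: "(real^'n \<Rightarrow> real) \<Rightarrow> real^'n \<Rightarrow> real \<Rightarrow> real" where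
  "homog g x z = (g x - g 0) + z * g 0"

definition persp_relax :: "(real^'n \<Rightarrow> real) \<Rightarrow> (nat \<Rightarrow> real^'n) \<Rightarrow> nat \<Rightarrow> ((real^'n) \<times> real \<times> real) set" where
  "persp_relax f v d = closure {(x, y, z). homog (affine_interp f v d) x z \<ge> y \<and> y \<ge> z * f (inverse z *\<^sub>R x)
      \<and> x \<in> (\<lambda>p. z *\<^sub>R p) ` simplex_of v d \<and> 1 \<ge> z \<and> z > 0}"

definition naive_relax :: "(real^'n \<Rightarrow> real) \<Rightarrow> (nat \<Rightarrow> real^'n) \<Rightarrow> nat \<Rightarrow> ((real^'n) \<times> real \<times> real) set" where
  "naive_relax f v d = {(x, y, z). homog (affine_interp f v d) x z \<ge> y \<and> y \<ge> f x
      \<and> x \<in> (\<lambda>p. z *\<^sub>R p) ` simplex_of v d \<and> 1 \<ge> z \<and> z \<ge> 0}"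

end

theory Submission
  imports Defs
begin

text \<open>
  Write \<open>\<alpha> = c \<bullet> v 0\<close> and \<open>\<beta> = \<alpha> - u\<close>, the constant value of \<open>c \<bullet> x\<close> on the facet
  opposite the apex \<open>v 0\<close>. Then \<open>c \<bullet> w = \<beta> + u height(w)\<close>, where \<open>height(w)\<close> is the
  barycentric coordinate of \<open>w\<close> at the apex, so both \<open>f\<close> and its affine interpolant \<open>\<mu>\<close>
  depend on \<open>w \<in> J\<close> only through \<open>height(w)\<close>. Since \<open>{w \<in> J. height w \<ge> s}\<close> is a copy of
  \<open>J\<close> scaled by \<open>1 - s\<close>, the image of Lebesgue measure on \<open>J\<close> under \<open>height\<close> has density
  \<open>d (1 - s)^(d-1) vol J\<close> on \<open>[0,1]\<close>.

  Both volumes are computed by Tonelli, slicing first in \<open>y\<close>, then in \<open>x \<in> z J\<close>, then in \<open>z\<close>.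
  Over \<open>x = z w\<close> the \<open>y\<close>-interval has length \<open>z (\<mu>(w) - f(w))\<close> for the perspective
  relaxation and \<open>z \<mu>(w) - f(z w)\<close> for the naive one; substituting \<open>x = z w\<close> and pushing
  forward along \<open>h\<close> leaves one-dimensional integrals of exponentials against polynomials,
  which produce the truncated exponential series. Taking the closure only adds points
  with \<open>z = 0\<close>, a null set.
\<close>

section \<open>Truncated exponential series and integrals over the unit interval\<close>

definition exp_taylor :: "nat \<Rightarrow> real \<Rightarrow> real" where
  "exp_taylor m x = (\<Sum>j<m. x ^ j / fact j)"

lemma exp_taylor_Suc: "exp_taylor (Suc m) x = exp_taylor m x + x ^ m / fact m"
  by (simp add: exp_taylor_def)

lemma exp_taylor_Suc_zero [simp]: "exp_taylor (Suc m) 0 = 1"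
  by (induction m) (auto simp: exp_taylor_def)

lemma has_real_derivative_exp_taylor:
  "(exp_taylor (Suc m) has_real_derivative exp_taylor m x) (at x)"
proof (induction m)
  case 0
  show ?case by (simp add: exp_taylor_def)
next
  case (Suc m)
  have "((\<lambda>x. x ^ Suc m / fact (Suc m)) has_real_derivative x ^ m / fact m) (at x)"
    by (rule DERIV_cong, rule DERIV_cdivide, rule DERIV_pow)
       (simp add: fact_Suc field_simps del: of_nat_Suc)
  from DERIV_add[OF Suc this] show ?case
    by (simp add: exp_taylor_Suc[of "Suc m"] exp_taylor_Suc[of m] fun_eq_iff)
qed

lemma has_integral_unit_interval_ftc:
  assumes "\<And>x. (F has_real_derivative f x) (at x)"
  shows "(f has_integral (F 1 - F 0)) {0..1::real}"
  by (rule fundamental_theorem_of_calculus)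
     (auto simp: has_real_derivative_iff_has_vector_derivative[symmetric]
       intro: has_field_derivative_at_within assms)

lemma has_integral_pow_unit_interval: "((\<lambda>z::real. z ^ k) has_integral 1 / (real k + 1)) {0..1}"
proof -
  have "((\<lambda>z::real. z ^ k) has_integral 1 ^ Suc k / (real k + 1) - 0 ^ Suc k / (real k + 1)) {0..1}"
    by (rule has_integral_unit_interval_ftc, rule DERIV_cong, rule DERIV_cdivide, rule DERIV_pow)
       (simp add: field_simps)
  then show ?thesis by simp
qed

lemma has_integral_one_minus_pow_exp:
  assumes "w \<noteq> 0"
  shows "((\<lambda>s. (1 - s) ^ m * exp (s * w)) has_integral
     fact m / w ^ Suc m * (exp w - exp_taylor (Suc m) w)) {0..1}"
proof -
  define F where "F s = fact m / w ^ Suc m * (exp (s * w) * exp_taylor (Suc m) (w * (1 - s)))" for s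
  have "(F has_real_derivative (1 - s) ^ m * exp (s * w)) (at s)" for s
  proof -
    have "((\<lambda>s. exp_taylor (Suc m) (w * (1 - s))) has_real_derivative exp_taylor m (w * (1 - s)) * (- w)) (at s)"
      by (rule DERIV_chain2[OF has_real_derivative_exp_taylor]) (auto intro!: derivative_eq_intros)
    then have "(F has_real_derivative fact m / w ^ Suc m * (exp (s * w) * w * exp_taylor (Suc m) (w * (1 - s))
        + exp (s * w) * (exp_taylor m (w * (1 - s)) * (- w)))) (at s)"
      unfolding F_def
      by (intro DERIV_cmult DERIV_cong[OF DERIV_mult]) (auto intro!: derivative_eq_intros)
    moreover have "fact m / w ^ Suc m * (exp (s * w) * w * exp_taylor (Suc m) (w * (1 - s))
        + exp (s * w) * (exp_taylor m (w * (1 - s)) * (- w))) = (1 - s) ^ m * exp (s * w)"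
      using assms by (simp only: exp_taylor_Suc power_mult_distrib) (simp add: field_simps)
    ultimately show ?thesis by simp
  qed
  from has_integral_unit_interval_ftc[of F, OF this] show ?thesis
    using assms by (simp add: F_def right_diff_distrib)
qed

lemma has_integral_pow_exp:
  assumes "b \<noteq> 0"
  shows "((\<lambda>z. z ^ m * exp (z * b)) has_integral
     fact m / (- b) ^ Suc m * (1 - exp b * exp_taylor (Suc m) (- b))) {0..1}"
proof -
  define F where "F z = - (fact m / (- b) ^ Suc m) * (exp (z * b) * exp_taylor (Suc m) (- b * z))" for z
  have "(F has_real_derivative z ^ m * exp (z * b)) (at z)" for z
  proof -
    have "((\<lambda>z. exp_taylor (Suc m) (- b * z)) has_real_derivative exp_taylor m (- b * z) * (- b)) (at z)"
      by (rule DERIV_chain2[OF has_real_derivative_exp_taylor]) (auto intro!: derivative_eq_intros)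
    then have "(F has_real_derivative - (fact m / (- b) ^ Suc m) * (exp (z * b) * b * exp_taylor (Suc m) (- b * z)
        + exp (z * b) * (exp_taylor m (- b * z) * (- b)))) (at z)"
      unfolding F_def
      by (intro DERIV_cmult DERIV_cong[OF DERIV_mult]) (auto intro!: derivative_eq_intros)
    moreover have "- (fact m / (- b) ^ Suc m) * (exp (z * b) * b * exp_taylor (Suc m) (- b * z)
        + exp (z * b) * (exp_taylor m (- b * z) * (- b))) = z ^ m * exp (z * b)"
      using assms by (simp only: exp_taylor_Suc power_mult_distrib) (simp add: field_simps)
    ultimately show ?thesis by simp
  qed
  from has_integral_unit_interval_ftc[of F, OF this] show ?thesis
    using assms by (simp add: F_def algebra_simps)
qed

lemma has_integral_exp_minus_exp_taylor:
  assumes "1 \<le> d" and a: "a = b + u" and "a \<noteq> 0" "b \<noteq> 0"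
  shows "((\<lambda>z. exp (z * a) - exp (z * b) * exp_taylor d (z * u)) has_integral
     (exp a - exp b * exp_taylor d u - u ^ d / (- b) ^ d * (1 - exp b * exp_taylor d (- b))) / a) {0..1}"
proof -
  obtain m where m: "d = Suc m" using assms(1) by (cases d) auto
  define G where "G z = exp (z * a) - exp (z * b) * exp_taylor d (z * u)" for z
  \<comment> \<open>\<open>G' = a G + u^d/m! z^m e^{zb}\<close>, so \<open>a \<integral>G\<close> is \<open>G 1 - G 0\<close> minus a known integral.\<close>
  have "((\<lambda>z. a * G z + u ^ d / fact m * (z ^ m * exp (z * b))) has_integral G 1 - G 0) {0..1}"
  proof (rule has_integral_unit_interval_ftc)
    fix z :: real
    have "((\<lambda>z. exp_taylor d (z * u)) has_real_derivative exp_taylor m (z * u) * u) (at z)"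
      unfolding m by (rule DERIV_chain2[OF has_real_derivative_exp_taylor]) (auto intro!: derivative_eq_intros)
    then have "(G has_real_derivative a * exp (z * a)
        - (b * exp (z * b) * exp_taylor d (z * u) + exp (z * b) * (exp_taylor m (z * u) * u))) (at z)"
      unfolding G_def by (auto intro!: derivative_eq_intros)
    moreover have "a * exp (z * a) - (b * exp (z * b) * exp_taylor d (z * u) + exp (z * b) * (exp_taylor m (z * u) * u))
        = a * G z + u ^ d / fact m * (z ^ m * exp (z * b))"
      unfolding G_def m by (simp only: exp_taylor_Suc power_mult_distrib a) (simp add: field_simps)
    ultimately show "(G has_real_derivative a * G z + u ^ d / fact m * (z ^ m * exp (z * b))) (at z)"
      by simp
  qed
  from has_integral_mult_right[OF this, of "1 / a"]
    has_integral_mult_right[OF has_integral_pow_exp[OF \<open>b \<noteq> 0\<close>], of "u ^ d / fact m / a" m]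
  have "((\<lambda>z. 1 / a * (a * G z + u ^ d / fact m * (z ^ m * exp (z * b)))
        - u ^ d / fact m / a * (z ^ m * exp (z * b))) has_integral
      1 / a * (G 1 - G 0) - u ^ d / fact m / a * (fact m / (- b) ^ Suc m * (1 - exp b * exp_taylor (Suc m) (- b))))
      {0..1}"
    by (rule has_integral_diff)
  moreover have "1 / a * (a * G z + u ^ d / fact m * (z ^ m * exp (z * b)))
      - u ^ d / fact m / a * (z ^ m * exp (z * b)) = G z" for z
    using \<open>a \<noteq> 0\<close> by (simp add: field_simps)
  moreover have "1 / a * (G 1 - G 0) - u ^ d / fact m / a * (fact m / (- b) ^ Suc m * (1 - exp b * exp_taylor (Suc m) (- b)))
      = (exp a - exp b * exp_taylor d u - u ^ d / (- b) ^ d * (1 - exp b * exp_taylor d (- b))) / a"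
    using \<open>a \<noteq> 0\<close> \<open>b \<noteq> 0\<close> by (simp add: G_def m field_simps)
  ultimately show ?thesis
    by (simp add: G_def)
qed

lemma fact_add_two: "(fact (d + 2) :: real) = (real d + 2) * (real d + 1) * fact d"
  by (simp add: numeral_2_eq_2 algebra_simps)

lemma exp_convex_combination:
  fixes t a b :: real
  shows "0 \<le> t \<Longrightarrow> t \<le> 1 \<Longrightarrow> exp ((1 - t) * a + t * b) \<le> (1 - t) * exp a + t * exp b"
  using convex_onD[OF exp_convex, of t a b] by simp

definition height_density :: "nat \<Rightarrow> real \<Rightarrow> real" where
  "height_density d s = real d * (1 - s) ^ (d - 1)"

lemma borel_measurable_height_density [measurable]: "height_density d \<in> borel_measurable borel"
  unfolding height_density_def[abs_def] by measurable

lemma height_density_nonneg: "s \<le> 1 \<Longrightarrow> 0 \<le> height_density d s"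
  by (simp add: height_density_def)

lemma has_integral_height_density_tail:
  assumes "a \<le> 1" "1 \<le> d"
  shows "(height_density d has_integral (1 - a) ^ d) {a..1}"
proof -
  have "(height_density d has_integral (- ((1 - 1) ^ d)) - (- ((1 - a) ^ d))) {a..1}"
  proof (rule fundamental_theorem_of_calculus[OF assms(1)])
    fix x :: real
    have "((\<lambda>s. - ((1 - s) ^ d)) has_real_derivative height_density d x) (at x)"
      unfolding height_density_def by (rule derivative_eq_intros refl)+ simp
    then show "((\<lambda>s. - ((1 - s) ^ d)) has_vector_derivative height_density d x) (at x within {a..1})"
      by (simp add: has_real_derivative_iff_has_vector_derivative[symmetric] has_field_derivative_at_within)
  qed
  then show ?thesis using assms by (simp add: power_0_left)
qed

lemma has_integral_height_density:
  "1 \<le> d \<Longrightarrow> (height_density d has_integral 1) {0..1}"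
  using has_integral_height_density_tail[of 0 d] by simp

lemma has_integral_height_density_times_id:
  assumes "1 \<le> d"
  shows "((\<lambda>s. height_density d s * s) has_integral 1 / (real d + 1)) {0..1}"
proof -
  have "height_density d s * s = height_density d s - real d / real (Suc d) * height_density (Suc d) s"
    for s using assms by (cases d) (simp_all add: height_density_def field_simps)
  moreover have "1 / (real d + 1) = 1 - real d / real (Suc d) * 1"
    by (simp add: field_simps)
  ultimately show ?thesis
    by (simp only:) (intro has_integral_diff has_integral_mult_right has_integral_height_density assms, simp)
qed

lemma has_integral_height_density_times_exp:
  assumes "1 \<le> d" "w \<noteq> 0"
  shows "((\<lambda>s. height_density d s * exp (s * w)) has_integral
     fact d / w ^ d * (exp w - exp_taylor d w)) {0..1}"
proof -
  obtain m where m: "d = Suc m" using assms(1) by (cases d) auto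
  from has_integral_mult_right[OF has_integral_one_minus_pow_exp[OF assms(2)], of "real d" m]
  show ?thesis by (simp add: m height_density_def fact_Suc mult.assoc)
qed

lemma emeasure_height_density_greaterThan:
  assumes "0 \<le> V" "1 \<le> d"
  shows "emeasure (density lborel (\<lambda>s. ennreal (V * height_density d s) * indicator {0..1} s)) {x<..}
    = ennreal ((if x < 0 then 1 else if x < 1 then (1 - x) ^ d else 0) * V)"
proof -
  let ?D = "\<lambda>s. ennreal (V * height_density d s) * indicator {0..1} s"
  have "emeasure (density lborel ?D) {x<..} = (\<integral>\<^sup>+s. ?D s * indicator {x<..} s \<partial>lborel)"
    by (rule emeasure_density) auto
  also have "\<dots> = ennreal ((if x < 0 then 1 else if x < 1 then (1 - x) ^ d else 0) * V)"
  proof (cases "x < 1")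
    case False
    then have "(\<lambda>s. ?D s * indicator {x<..} s) = (\<lambda>_. 0)"
      by (auto simp: indicator_def fun_eq_iff)
    then show ?thesis using False by simp
  next
    case True
    define a where "a = max x 0"
    have "(\<integral>\<^sup>+s. ?D s * indicator {x<..} s \<partial>lborel)
        = (\<integral>\<^sup>+s. ennreal (V * height_density d s) * indicator {a..1} s \<partial>lborel)"
      by (rule nn_integral_cong_AE)
         (use AE_lborel_singleton[of x] in \<open>eventually_elim, auto simp: indicator_def a_def\<close>)
    also have "\<dots> = ennreal (V * (1 - a) ^ d)"
      using has_integral_height_density_tail[of a d] True assms
      by (intro nn_integral_has_integral_lebesgue' has_integral_mult_right)
         (auto simp: a_def height_density_nonneg)
    finally show ?thesis using True by (simp add: a_def ac_simps)
  qed
  finally show ?thesis .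
qed

section \<open>Lebesgue measure: affine images and sections\<close>

lemma nn_integral_lborel_affine:
  fixes g :: "'a::euclidean_space \<Rightarrow> ennreal"
  assumes "c \<noteq> 0" and [measurable]: "g \<in> borel_measurable borel"
  shows "(\<integral>\<^sup>+x. g x \<partial>lborel) = ennreal (\<bar>c\<bar> ^ DIM('a)) * (\<integral>\<^sup>+y. g (t + c *\<^sub>R y) \<partial>lborel)"
  by (subst lborel_affine[OF assms(1), of t])
     (simp add: nn_integral_density nn_integral_distr nn_integral_cmult)

lemma emeasure_lborel_affine_image:
  fixes S :: "'a::euclidean_space set"
  assumes "c \<noteq> 0" and [measurable]: "S \<in> sets borel"
  shows "emeasure lborel ((\<lambda>y. t + c *\<^sub>R y) ` S) = ennreal (\<bar>c\<bar> ^ DIM('a)) * emeasure lborel S"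
proof -
  have image: "(\<lambda>y. t + c *\<^sub>R y) ` S = (\<lambda>y. inverse c *\<^sub>R (y - t)) -` S"
    using assms(1) by (force simp: image_iff)
  have [measurable]: "(\<lambda>y. t + c *\<^sub>R y) ` S \<in> sets borel"
    unfolding image by (rule measurable_sets_borel[OF _ assms(2)]) measurable
  have "emeasure lborel ((\<lambda>y. t + c *\<^sub>R y) ` S) = (\<integral>\<^sup>+x. indicator ((\<lambda>y. t + c *\<^sub>R y) ` S) x \<partial>lborel)"
    by simp
  also have "\<dots> = ennreal (\<bar>c\<bar> ^ DIM('a)) * (\<integral>\<^sup>+y. indicator ((\<lambda>y. t + c *\<^sub>R y) ` S) (t + c *\<^sub>R y) \<partial>lborel)"
    by (rule nn_integral_lborel_affine[OF assms(1)]) measurable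
  also have "(\<lambda>y. indicator ((\<lambda>y. t + c *\<^sub>R y) ` S) (t + c *\<^sub>R y)) = (indicator S :: _ \<Rightarrow> ennreal)"
    using assms(1) by (auto simp: indicator_def image)
  finally show ?thesis by simp
qed

lemma mem_scaleR_image_iff:
  fixes A :: "'a::real_vector set"
  assumes "A \<noteq> {}"
  shows "x \<in> (\<lambda>p. z *\<^sub>R p) ` A \<longleftrightarrow> (z = 0 \<and> x = 0) \<or> (z \<noteq> 0 \<and> inverse z *\<^sub>R x \<in> A)"
proof (cases "z = 0")
  case False
  have "x \<in> (\<lambda>p. z *\<^sub>R p) ` A \<longleftrightarrow> inverse z *\<^sub>R x \<in> A"
  proof
    assume "inverse z *\<^sub>R x \<in> A"
    moreover have "x = z *\<^sub>R (inverse z *\<^sub>R x)" using False by simp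
    ultimately show "x \<in> (\<lambda>p. z *\<^sub>R p) ` A" by blast
  qed (use False in auto)
  with False show ?thesis by simp
qed (use assms in auto)

lemma emeasure_lborel_Icc_ennreal: "emeasure lborel {a..b::real} = ennreal (b - a)"
  by (simp add: emeasure_lborel_Icc_eq ennreal_neg)

lemma emeasure_lborel_by_vertical_sections:
  fixes S :: "('a::euclidean_space \<times> real \<times> real) set"
  assumes S[measurable]: "S \<in> sets borel"
  shows "emeasure lborel S = (\<integral>\<^sup>+z. \<integral>\<^sup>+x. emeasure lborel {y. (x, y, z) \<in> S} \<partial>lborel \<partial>lborel)"
proof -
  have sets: "T \<in> sets borel \<Longrightarrow> T \<in> sets (lborel \<Otimes>\<^sub>M lborel)" for T :: "('b::euclidean_space \<times> 'c::euclidean_space) set"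
    unfolding lborel_prod by simp
  have "emeasure lborel S = (\<integral>\<^sup>+x. emeasure lborel (Pair x -` S) \<partial>lborel)"
    using lborel.emeasure_pair_measure_alt[OF sets[OF S]] by (simp add: lborel_prod)
  also have "\<dots> = (\<integral>\<^sup>+x. \<integral>\<^sup>+z. emeasure lborel {y. (x, y, z) \<in> S} \<partial>lborel \<partial>lborel)"
  proof (rule nn_integral_cong)
    fix x :: 'a
    have "Pair x -` S \<in> sets borel" by (rule measurable_sets_borel[OF _ S]) measurable
    from lborel_pair.emeasure_pair_measure_alt2[OF sets[OF this]]
    show "emeasure lborel (Pair x -` S) = (\<integral>\<^sup>+z. emeasure lborel {y. (x, y, z) \<in> S} \<partial>lborel)"
      by (simp add: lborel_prod vimage_def)
  qed
  also have "\<dots> = (\<integral>\<^sup>+z. \<integral>\<^sup>+x. emeasure lborel {y. (x, y, z) \<in> S} \<partial>lborel \<partial>lborel)"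
  proof (rule lborel_pair.Fubini'[symmetric])
    define Q where "Q = (\<lambda>p. (fst (fst p), snd p, snd (fst p))) -` S"
    have "Q \<in> sets ((lborel \<Otimes>\<^sub>M lborel) \<Otimes>\<^sub>M lborel)"
      unfolding Q_def lborel_prod sets_lborel
      by (rule measurable_sets_borel[OF borel_measurable_continuous_onI S]) (intro continuous_intros)
    from lborel.measurable_emeasure_Pair[OF this]
    show "case_prod (\<lambda>x z. emeasure lborel {y. (x, y, z) \<in> S}) \<in> borel_measurable (lborel \<Otimes>\<^sub>M lborel)"
      by (simp add: Q_def vimage_def case_prod_beta')
  qed
  finally show ?thesis .
qed

lemma null_sets_lborel_third_zero:
  "{p :: 'a::euclidean_space \<times> real \<times> real. snd (snd p) = 0} \<in> null_sets lborel"
proof -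
  have "{p :: 'a \<times> real \<times> real. snd (snd p) = 0} = {p. (0, 0, 1) \<bullet> p = 0}"
    by (auto simp: inner_prod_def)
  moreover have "{p :: 'a \<times> real \<times> real. (0, 0, 1) \<bullet> p = 0} \<in> null_sets lebesgue"
    using negligible_hyperplane[of "(0, 0, 1) :: 'a \<times> real \<times> real" 0]
    by (simp add: negligible_iff_null_sets zero_prod_def)
  ultimately show ?thesis
    by (simp add: null_sets_completion_iff)
qed

section \<open>Affine interpolation on a full-dimensional simplex\<close>

lemma affine_hull_simplex_vertices:
  fixes v :: "nat \<Rightarrow> real^'n"
  assumes "d = CARD('n)" "inj_on v {0..d}" "\<not> affine_dependent (v ` {0..d})"
  shows "affine hull (v ` {0..d}) = UNIV"
proof -
  have "card (v ` {0..d}) = d + 1"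
    using assms(2) by (simp add: card_image)
  with aff_dim_affine_independent[OF assms(3)] assms(1)
  have "aff_dim (v ` {0..d}) = int DIM(real^'n)" by simp
  then show ?thesis by (simp only: aff_dim_eq_full)
qed

lemma affine_interp_eqI:
  assumes "affine hull (v ` {0..d}) = UNIV" and "\<forall>i\<in>{0..d}. a \<bullet> v i + b = f (v i)"
  shows "affine_interp f v d = (\<lambda>x. a \<bullet> x + b)"
  unfolding affine_interp_def
proof (rule the_equality)
  show "(\<exists>a' b'. (\<lambda>x. a \<bullet> x + b) = (\<lambda>x. a' \<bullet> x + b')) \<and> (\<forall>i\<in>{0..d}. a \<bullet> v i + b = f (v i))"
    using assms(2) by blast
next
  fix g assume g: "(\<exists>a' b'. g = (\<lambda>x. a' \<bullet> x + b')) \<and> (\<forall>i\<in>{0..d}. g (v i) = f (v i))"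
  then obtain a' b' where g_eq: "g = (\<lambda>x. a' \<bullet> x + b')" by blast
  have "affine {x. g x = a \<bullet> x + b}"
    using affine_hyperplane[of "a' - a" "b - b'"]
    by (simp add: g_eq inner_diff_left algebra_simps)
  moreover have "v ` {0..d} \<subseteq> {x. g x = a \<bullet> x + b}"
    using g assms(2) by auto
  ultimately have "affine hull (v ` {0..d}) \<subseteq> {x. g x = a \<bullet> x + b}"
    by (rule hull_minimal[rotated])
  then show "g = (\<lambda>x. a \<bullet> x + b)"
    using assms(1) by auto
qed

section \<open>The apex coordinate of a simplex\<close>

locale apex_simplex =
  fixes v :: "nat \<Rightarrow> real^'n" and c :: "real^'n" and u :: real and d :: nat
  assumes d_def: "d = CARD('n)"
    and base_level: "\<forall>j\<in>{1..d}. c \<bullet> v 0 - c \<bullet> v j = u"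
    and u_nz: "u \<noteq> 0"
begin

abbreviation "J \<equiv> simplex_of v d"

abbreviation "\<alpha> \<equiv> c \<bullet> v 0"

abbreviation "\<beta> \<equiv> c \<bullet> v 0 - u"

definition height :: "real^'n \<Rightarrow> real" where
  "height w = (c \<bullet> w - \<beta>) / u"

lemma d_pos: "1 \<le> d"
  using d_def by (simp add: Suc_leI)

lemma c_nz: "c \<noteq> 0"
  using base_level d_pos u_nz by auto

lemma height_vertex: "p \<in> v ` {0..d} \<Longrightarrow> height p = (if p = v 0 then 1 else 0)"
proof -
  assume "p \<in> v ` {0..d}"
  then obtain j where j: "j \<le> d" "p = v j" by auto
  have "height (v 0) = 1" "j \<noteq> 0 \<Longrightarrow> height (v j) = 0"
    using j base_level u_nz by (auto simp: height_def)
  then show ?thesis using j by (cases "j = 0") auto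
qed

lemma simplex_eq: "J = convex hull (v ` {0..d})"
  by (simp add: simplex_of_def)

lemma simplex_convex_combination:
  "w \<in> J \<longleftrightarrow> (\<exists>\<mu>. (\<forall>p\<in>v ` {0..d}. 0 \<le> \<mu> p) \<and> sum \<mu> (v ` {0..d}) = 1
     \<and> (\<Sum>p\<in>v ` {0..d}. \<mu> p *\<^sub>R p) = w)"
  by (simp add: simplex_eq convex_hull_finite)

lemma apex_in_simplex: "v 0 \<in> J"
  unfolding simplex_eq by (rule hull_inc) simp

lemma simplex_nonempty: "J \<noteq> {}"
  using apex_in_simplex by auto

lemma compact_simplex: "compact J"
  unfolding simplex_eq by (rule compact_convex_hull[OF finite_imp_compact]) simp

lemma simplex_borel [measurable]: "J \<in> sets borel"
  using compact_simplex by (simp add: compact_imp_closed)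

lemma emeasure_simplex: "emeasure lborel J = ennreal (measure lebesgue J)"
  using emeasure_bounded_finite[OF compact_imp_bounded[OF compact_simplex]]
  by (simp add: emeasure_eq_ennreal_measure measure_completion)

lemma height_convex_combination:
  assumes "sum \<mu> (v ` {0..d}) = 1"
  shows "height (\<Sum>p\<in>v ` {0..d}. \<mu> p *\<^sub>R p) = \<mu> (v 0)"
proof -
  have "(\<Sum>p\<in>v ` {0..d}. \<mu> p * \<beta>) = \<beta>"
    using assms by (simp add: sum_distrib_right[symmetric])
  then have "height (\<Sum>p\<in>v ` {0..d}. \<mu> p *\<^sub>R p)
      = ((\<Sum>p\<in>v ` {0..d}. \<mu> p * (c \<bullet> p)) - (\<Sum>p\<in>v ` {0..d}. \<mu> p * \<beta>)) / u"
    by (simp add: height_def inner_sum_right)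
  also have "\<dots> = (\<Sum>p\<in>v ` {0..d}. \<mu> p * height p)"
    by (simp add: height_def sum_subtractf[symmetric] sum_divide_distrib right_diff_distrib)
  also have "\<dots> = \<mu> (v 0)"
    by (simp add: height_vertex if_distrib cong: if_cong)
  finally show ?thesis .
qed

lemma height_simplex: "w \<in> J \<Longrightarrow> 0 \<le> height w \<and> height w \<le> 1"
proof -
  assume "w \<in> J"
  then obtain \<mu> where \<mu>: "\<forall>p\<in>v ` {0..d}. 0 \<le> \<mu> p" "sum \<mu> (v ` {0..d}) = 1"
      "(\<Sum>p\<in>v ` {0..d}. \<mu> p *\<^sub>R p) = w"
    unfolding simplex_convex_combination by blast
  have "\<mu> (v 0) \<le> sum \<mu> (v ` {0..d})"
    using \<mu>(1) by (intro member_le_sum) auto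
  then show ?thesis
    using \<mu> height_convex_combination[OF \<mu>(2)] by auto
qed

lemma height_superlevel_eq_image:
  assumes "0 \<le> x" "x < 1"
  shows "{w\<in>J. x \<le> height w} = (\<lambda>y. x *\<^sub>R v 0 + (1 - x) *\<^sub>R y) ` J"
proof safe
  fix w assume w: "w \<in> J" "x \<le> height w"
  then obtain \<mu> where \<mu>: "\<forall>p\<in>v ` {0..d}. 0 \<le> \<mu> p" "sum \<mu> (v ` {0..d}) = 1"
      "(\<Sum>p\<in>v ` {0..d}. \<mu> p *\<^sub>R p) = w"
    unfolding simplex_convex_combination by blast
  \<comment> \<open>Remove mass \<open>x\<close> from the apex and renormalise.\<close>
  define \<mu>' where "\<mu>' p = (\<mu> p - (if p = v 0 then x else 0)) / (1 - x)" for p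
  have "\<mu> (v 0) = height w"
    using height_convex_combination[OF \<mu>(2)] \<mu>(3) by simp
  then have "\<forall>p\<in>v ` {0..d}. 0 \<le> \<mu>' p"
    using \<mu>(1) assms w(2) by (auto simp: \<mu>'_def)
  moreover have "sum \<mu>' (v ` {0..d}) = 1"
    using assms \<mu>(2) by (simp add: \<mu>'_def sum_divide_distrib[symmetric] sum_subtractf)
  ultimately have y: "(\<Sum>p\<in>v ` {0..d}. \<mu>' p *\<^sub>R p) \<in> J"
    unfolding simplex_convex_combination by blast
  have "(1 - x) *\<^sub>R (\<Sum>p\<in>v ` {0..d}. \<mu>' p *\<^sub>R p)
      = (\<Sum>p\<in>v ` {0..d}. \<mu> p *\<^sub>R p) - (\<Sum>p\<in>v ` {0..d}. (if p = v 0 then x else 0) *\<^sub>R p)"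
    using assms by (simp add: scaleR_sum_right \<mu>'_def scaleR_diff_left sum_subtractf)
  also have "(\<Sum>p\<in>v ` {0..d}. (if p = v 0 then x else 0) *\<^sub>R p) = x *\<^sub>R v 0"
    by (simp add: if_distrib[of "\<lambda>t. t *\<^sub>R _"] cong: if_cong)
  finally have "w = x *\<^sub>R v 0 + (1 - x) *\<^sub>R (\<Sum>p\<in>v ` {0..d}. \<mu>' p *\<^sub>R p)"
    using \<mu>(3) by simp
  with y show "w \<in> (\<lambda>y. x *\<^sub>R v 0 + (1 - x) *\<^sub>R y) ` J"
    by blast
next
  fix y assume y: "y \<in> J"
  show "x *\<^sub>R v 0 + (1 - x) *\<^sub>R y \<in> J"
    using convex_convex_hull apex_in_simplex y assms unfolding simplex_eq
    by (intro convexD) auto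
  have "height (x *\<^sub>R v 0 + (1 - x) *\<^sub>R y) = x + (1 - x) * height y"
    using u_nz by (simp only: height_def inner_add_right inner_scaleR_right) (simp add: field_simps)
  then show "x \<le> height (x *\<^sub>R v 0 + (1 - x) *\<^sub>R y)"
    using height_simplex[OF y] assms by simp
qed

lemma borel_measurable_height [measurable]: "height \<in> borel_measurable borel"
  unfolding height_def[abs_def] by measurable

lemma emeasure_height_greaterThan:
  "emeasure lborel {w\<in>J. x < height w}
    = ennreal ((if x < 0 then 1 else if x < 1 then (1 - x) ^ d else 0) * measure lebesgue J)"
proof -
  consider "x < 0" | "1 \<le> x" | "0 \<le> x" "x < 1" by linarith
  then show ?thesis
  proof cases
    case 1
    then have "{w\<in>J. x < height w} = J" using height_simplex by force
    then show ?thesis using 1 emeasure_simplex by simp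
  next
    case 2
    then have empty: "{w\<in>J. x < height w} = {}" using height_simplex by force
    show ?thesis unfolding empty using 2 by simp
  next
    case 3
    \<comment> \<open>The level set of \<open>height\<close> is a hyperplane, hence null.\<close>
    have "{w. c \<bullet> w = \<beta> + x * u} \<in> null_sets lebesgue"
      using negligible_hyperplane[of c] c_nz negligible_iff_null_sets by blast
    then have null: "{w. c \<bullet> w = \<beta> + x * u} \<in> null_sets lborel"
      by (simp add: null_sets_completion_iff)
    have level: "c \<bullet> w = \<beta> + x * u \<longleftrightarrow> height w = x" for w
      using u_nz by (auto simp: height_def field_simps)
    have "{w\<in>J. x < height w} = {w\<in>J. x \<le> height w} - {w. c \<bullet> w = \<beta> + x * u}"
      by (auto simp: less_le level)
    then have "emeasure lborel {w\<in>J. x < height w} = emeasure lborel {w\<in>J. x \<le> height w}"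
      using emeasure_Diff_null_set[OF null] by simp
    also have "\<dots> = ennreal (\<bar>1 - x\<bar> ^ DIM(real^'n)) * emeasure lborel J"
      using 3 by (simp add: height_superlevel_eq_image emeasure_lborel_affine_image)
    also have "\<dots> = ennreal ((1 - x) ^ d * measure lebesgue J)"
      using 3 by (simp add: emeasure_simplex d_def[symmetric] ennreal_mult)
    finally show ?thesis using 3 by simp
  qed
qed

lemma distr_height:
  "distr (density lborel (indicator J)) borel height
    = density lborel (\<lambda>s. ennreal (measure lebesgue J * height_density d s) * indicator {0..1} s)"
proof (rule measure_eqI_lessThan)
  fix x :: real
  have [measurable]: "height -` {x<..} \<in> sets borel"
    by (rule measurable_sets_borel[OF borel_measurable_height]) simp
  have "emeasure (distr (density lborel (indicator J)) borel height) {x<..}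
      = emeasure (density lborel (indicator J)) (height -` {x<..})"
    by (subst emeasure_distr) auto
  also have "\<dots> = (\<integral>\<^sup>+w. indicator J w * indicator (height -` {x<..}) w \<partial>lborel)"
    by (rule emeasure_density) auto
  also have "\<dots> = (\<integral>\<^sup>+w. indicator {w\<in>J. x < height w} w \<partial>lborel)"
    by (intro nn_integral_cong) (auto simp: indicator_def)
  also have "\<dots> = emeasure lborel {w\<in>J. x < height w}"
    by (rule nn_integral_indicator) measurable
  finally have distr: "emeasure (distr (density lborel (indicator J)) borel height) {x<..}
      = ennreal ((if x < 0 then 1 else if x < 1 then (1 - x) ^ d else 0) * measure lebesgue J)"
    by (simp add: emeasure_height_greaterThan)
  then show "emeasure (distr (density lborel (indicator J)) borel height) {x<..} < \<infinity>"
    by simp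
  show "emeasure (distr (density lborel (indicator J)) borel height) {x<..}
      = emeasure (density lborel (\<lambda>s. ennreal (measure lebesgue J * height_density d s) * indicator {0..1} s)) {x<..}"
    using distr emeasure_height_density_greaterThan d_pos by simp
qed auto

lemma nn_integral_simplex_height:
  assumes [measurable]: "g \<in> borel_measurable borel"
  shows "(\<integral>\<^sup>+w. indicator J w * g (height w) \<partial>lborel)
    = (\<integral>\<^sup>+s. ennreal (measure lebesgue J * height_density d s) * indicator {0..1} s * g s \<partial>lborel)"
proof -
  have "(\<integral>\<^sup>+w. indicator J w * g (height w) \<partial>lborel)
      = (\<integral>\<^sup>+s. g s \<partial>distr (density lborel (indicator J)) borel height)"
    by (simp add: nn_integral_density nn_integral_distr)
  then show ?thesis
    by (simp add: distr_height nn_integral_density)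
qed

lemma nn_integral_scaled_simplex:
  assumes "0 < z" and [measurable]: "G \<in> borel_measurable borel" "g \<in> borel_measurable borel"
    and G: "\<And>w. w \<in> J \<Longrightarrow> G (z *\<^sub>R w) = g (height w)"
    and g_nonneg: "\<And>s. s \<in> {0..1} \<Longrightarrow> 0 \<le> g s"
    and I: "((\<lambda>s. measure lebesgue J * height_density d s * g s) has_integral I) {0..1}"
  shows "(\<integral>\<^sup>+x. indicator ((\<lambda>p. z *\<^sub>R p) ` J) x * ennreal (G x) \<partial>lborel) = ennreal (z ^ d * I)"
proof -
  have scaled: "z *\<^sub>R w \<in> (\<lambda>p. z *\<^sub>R p) ` J \<longleftrightarrow> w \<in> J" for w
    using \<open>0 < z\<close> apex_in_simplex by (subst mem_scaleR_image_iff) auto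
  have [measurable]: "(\<lambda>p. z *\<^sub>R p) ` J \<in> sets borel"
    using compact_scaling[OF compact_simplex] by (simp add: compact_imp_closed)
  have "(\<integral>\<^sup>+x. indicator ((\<lambda>p. z *\<^sub>R p) ` J) x * ennreal (G x) \<partial>lborel)
      = ennreal (\<bar>z\<bar> ^ DIM(real^'n))
        * (\<integral>\<^sup>+w. indicator ((\<lambda>p. z *\<^sub>R p) ` J) (0 + z *\<^sub>R w) * ennreal (G (0 + z *\<^sub>R w)) \<partial>lborel)"
    using \<open>0 < z\<close> by (intro nn_integral_lborel_affine) auto
  also have "(\<lambda>w. indicator ((\<lambda>p. z *\<^sub>R p) ` J) (0 + z *\<^sub>R w) * ennreal (G (0 + z *\<^sub>R w)))
      = (\<lambda>w. indicator J w * ennreal (g (height w)))"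
    by (auto simp: indicator_def scaled G fun_eq_iff)
  also have "(\<integral>\<^sup>+w. indicator J w * ennreal (g (height w)) \<partial>lborel)
      = (\<integral>\<^sup>+s. ennreal (measure lebesgue J * height_density d s) * indicator {0..1} s * ennreal (g s) \<partial>lborel)"
    by (rule nn_integral_simplex_height) measurable
  also have "\<dots> = (\<integral>\<^sup>+s. ennreal (measure lebesgue J * height_density d s * g s) * indicator {0..1} s \<partial>lborel)"
    using g_nonneg by (intro nn_integral_cong) (auto simp: indicator_def ennreal_mult height_density_nonneg)
  also have "\<dots> = ennreal I"
    using g_nonneg by (intro nn_integral_has_integral_lebesgue'[OF _ I]) (simp add: height_density_nonneg)
  moreover have "0 \<le> I"
    using g_nonneg by (intro has_integral_nonneg[OF I]) (simp add: height_density_nonneg)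
  ultimately show ?thesis
    using \<open>0 < z\<close> by (simp add: ennreal_mult d_def[symmetric])
qed

section \<open>Volumes of the two relaxations of \<open>exp (c \<bullet> x) - 1\<close>\<close>

definition expc :: "real^'n \<Rightarrow> real" where
  "expc x = exp (c \<bullet> x) - 1"

definition mu :: "real^'n \<Rightarrow> real" where
  "mu x = exp \<beta> - 1 + height x * (exp \<alpha> - exp \<beta>)"

lemma mu_vertex:
  assumes "i \<in> {0..d}"
  shows "mu (v i) = expc (v i)"
proof (cases "i = 0")
  case False
  then have "c \<bullet> v i = \<beta>" using assms base_level by auto
  then show ?thesis by (simp add: mu_def expc_def height_def)
qed (simp add: mu_def expc_def height_def u_nz)

lemma affine_interp_expc:
  assumes "affine hull (v ` {0..d}) = UNIV"
  shows "affine_interp expc v d = mu"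
proof -
  define a where "a = ((exp \<alpha> - exp \<beta>) / u) *\<^sub>R c"
  define b where "b = exp \<beta> - 1 - \<beta> * (exp \<alpha> - exp \<beta>) / u"
  have mu_eq: "mu = (\<lambda>x. a \<bullet> x + b)"
    using u_nz by (auto simp: fun_eq_iff mu_def height_def a_def b_def field_simps)
  have "\<forall>i\<in>{0..d}. a \<bullet> v i + b = expc (v i)"
    using mu_vertex by (simp add: mu_eq)
  from affine_interp_eqI[OF assms this] show ?thesis
    by (simp add: mu_eq)
qed

lemma homog_mu_scaleR: "homog mu (z *\<^sub>R w) z = z * mu w"
  using u_nz by (simp add: homog_def mu_def height_def inner_scaleR_right field_simps)

lemma borel_measurable_mu [measurable]: "mu \<in> borel_measurable borel"
  unfolding mu_def[abs_def] by measurable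

lemma borel_measurable_expc [measurable]: "expc \<in> borel_measurable borel"
  unfolding expc_def[abs_def] by measurable

definition persp_core :: "((real^'n) \<times> real \<times> real) set" where
  "persp_core = {(x, y, z). homog mu x z \<ge> y \<and> y \<ge> z * expc (inverse z *\<^sub>R x)
      \<and> x \<in> (\<lambda>p. z *\<^sub>R p) ` J \<and> 1 \<ge> z \<and> z > 0}"

definition naive_set :: "((real^'n) \<times> real \<times> real) set" where
  "naive_set = {(x, y, z). homog mu x z \<ge> y \<and> y \<ge> expc x
      \<and> x \<in> (\<lambda>p. z *\<^sub>R p) ` J \<and> 1 \<ge> z \<and> z \<ge> 0}"

lemma persp_core_iff:
  "(x, y, z) \<in> persp_core \<longleftrightarrow> homog mu x z \<ge> y \<and> y \<ge> z * expc (inverse z *\<^sub>R x)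
      \<and> inverse z *\<^sub>R x \<in> J \<and> 1 \<ge> z \<and> z > 0"
  by (auto simp: persp_core_def mem_scaleR_image_iff[OF simplex_nonempty])

lemma naive_set_iff:
  "(x, y, z) \<in> naive_set \<longleftrightarrow> homog mu x z \<ge> y \<and> y \<ge> expc x
      \<and> (z = 0 \<and> x = 0 \<or> z \<noteq> 0 \<and> inverse z *\<^sub>R x \<in> J) \<and> 1 \<ge> z \<and> z \<ge> 0"
  by (auto simp: naive_set_def mem_scaleR_image_iff[OF simplex_nonempty])

lemma persp_core_borel [measurable]: "persp_core \<in> sets borel"
proof -
  have "Measurable.pred (borel \<Otimes>\<^sub>M borel \<Otimes>\<^sub>M borel) (\<lambda>p :: (real^'n) \<times> real \<times> real.
      mu (fst p) - mu 0 + snd (snd p) * mu 0 \<ge> fst (snd p)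
    \<and> fst (snd p) \<ge> snd (snd p) * expc (inverse (snd (snd p)) *\<^sub>R fst p)
    \<and> inverse (snd (snd p)) *\<^sub>R fst p \<in> J \<and> 1 \<ge> snd (snd p) \<and> snd (snd p) > 0)"
    by measurable
  moreover have "persp_core = {p. mu (fst p) - mu 0 + snd (snd p) * mu 0 \<ge> fst (snd p)
    \<and> fst (snd p) \<ge> snd (snd p) * expc (inverse (snd (snd p)) *\<^sub>R fst p)
    \<and> inverse (snd (snd p)) *\<^sub>R fst p \<in> J \<and> 1 \<ge> snd (snd p) \<and> snd (snd p) > 0}"
    by (auto simp: persp_core_iff homog_def)
  ultimately show ?thesis
    by (simp add: pred_def space_pair_measure borel_prod)
qed

lemma naive_set_borel [measurable]: "naive_set \<in> sets borel"
proof -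
  have "Measurable.pred (borel \<Otimes>\<^sub>M borel \<Otimes>\<^sub>M borel) (\<lambda>p :: (real^'n) \<times> real \<times> real.
      mu (fst p) - mu 0 + snd (snd p) * mu 0 \<ge> fst (snd p) \<and> fst (snd p) \<ge> expc (fst p)
    \<and> (snd (snd p) = 0 \<and> fst p = 0 \<or> snd (snd p) \<noteq> 0 \<and> inverse (snd (snd p)) *\<^sub>R fst p \<in> J)
    \<and> 1 \<ge> snd (snd p) \<and> snd (snd p) \<ge> 0)"
    by measurable
  moreover have "naive_set = {p. mu (fst p) - mu 0 + snd (snd p) * mu 0 \<ge> fst (snd p)
    \<and> fst (snd p) \<ge> expc (fst p)
    \<and> (snd (snd p) = 0 \<and> fst p = 0 \<or> snd (snd p) \<noteq> 0 \<and> inverse (snd (snd p)) *\<^sub>R fst p \<in> J)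
    \<and> 1 \<ge> snd (snd p) \<and> snd (snd p) \<ge> 0}"
    by (auto simp: naive_set_iff homog_def)
  ultimately show ?thesis
    by (simp add: pred_def space_pair_measure borel_prod)
qed

lemma closure_persp_core: "closure persp_core \<subseteq> persp_core \<union> {p. snd (snd p) = 0}"
proof
  fix p assume "p \<in> closure persp_core"
  then obtain q where q: "\<And>n. q n \<in> persp_core" and lim: "q \<longlonglongrightarrow> p"
    unfolding closure_sequential by blast
  obtain x y z where p: "p = (x, y, z)" by (cases p)
  define xs ys zs where "xs n = fst (q n)" and "ys n = fst (snd (q n))" and "zs n = snd (snd (q n))" for n
  have xs: "xs \<longlonglongrightarrow> x" unfolding xs_def using tendsto_fst[OF lim] p by simp
  have ys: "ys \<longlonglongrightarrow> y" unfolding ys_def using tendsto_fst[OF tendsto_snd[OF lim]] p by simp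
  have zs: "zs \<longlonglongrightarrow> z" unfolding zs_def using tendsto_snd[OF tendsto_snd[OF lim]] p by simp
  have qn: "homog mu (xs n) (zs n) \<ge> ys n \<and> ys n \<ge> zs n * expc (inverse (zs n) *\<^sub>R xs n)
      \<and> inverse (zs n) *\<^sub>R xs n \<in> J \<and> 1 \<ge> zs n \<and> zs n > 0" for n
    using q[of n] persp_core_iff[of "xs n" "ys n" "zs n"] by (simp add: xs_def ys_def zs_def)
  show "p \<in> persp_core \<union> {p. snd (snd p) = 0}"
  proof (cases "z = 0")
    case False
    have z: "0 \<le> z" "z \<le> 1"
      using qn by (auto intro: LIMSEQ_le_const[OF zs] LIMSEQ_le_const2[OF zs] less_imp_le)
    have scaled: "(\<lambda>n. inverse (zs n) *\<^sub>R xs n) \<longlonglongrightarrow> inverse z *\<^sub>R x"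
      by (intro tendsto_intros zs xs False)
    have "inverse z *\<^sub>R x \<in> J"
      using qn by (intro closed_sequentially[OF compact_imp_closed[OF compact_simplex] _ scaled]) auto
    moreover have "(\<lambda>n. homog mu (xs n) (zs n)) \<longlonglongrightarrow> homog mu x z"
      unfolding homog_def mu_def height_def by (intro tendsto_intros xs zs u_nz)
    then have "y \<le> homog mu x z"
      by (rule LIMSEQ_le[OF ys]) (use qn in auto)
    moreover have "(\<lambda>n. zs n * expc (inverse (zs n) *\<^sub>R xs n)) \<longlonglongrightarrow> z * expc (inverse z *\<^sub>R x)"
      unfolding expc_def by (intro tendsto_intros scaled zs)
    then have "z * expc (inverse z *\<^sub>R x) \<le> y"
      by (rule LIMSEQ_le[OF _ ys]) (use qn in auto)
    ultimately show ?thesis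
      using z False by (simp add: p persp_core_iff)
  qed (simp add: p)
qed

lemma emeasure_closure_persp_core: "emeasure lborel (closure persp_core) = emeasure lborel persp_core"
proof -
  have "closure persp_core = persp_core \<union> (closure persp_core \<inter> {p. snd (snd p) = 0})"
    using closure_persp_core closure_subset by blast
  moreover have "closure persp_core \<inter> {p. snd (snd p) = 0} \<in> null_sets lborel"
    by (rule null_set_Int1[OF null_sets_lborel_third_zero]) simp
  ultimately show ?thesis
    by (metis emeasure_Un_null_set persp_core_borel sets_lborel)
qed

definition persp_gap :: "real \<Rightarrow> real" where
  "persp_gap s = exp \<beta> + s * (exp \<alpha> - exp \<beta>) - exp (\<beta> + s * u)"

definition persp_gap_mean :: real where
  "persp_gap_mean = exp \<beta> + (exp \<alpha> - exp \<beta>) / (real d + 1)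
    - exp \<beta> * (fact d / u ^ d * (exp u - exp_taylor d u))"

lemma borel_measurable_persp_gap [measurable]: "persp_gap \<in> borel_measurable borel"
  unfolding persp_gap_def[abs_def] by measurable

lemma persp_gap_nonneg:
  assumes "0 \<le> s" "s \<le> 1"
  shows "0 \<le> persp_gap s"
proof -
  have "exp (\<beta> + s * u) = exp ((1 - s) * \<beta> + s * \<alpha>)"
    by (simp add: algebra_simps)
  also have "\<dots> \<le> (1 - s) * exp \<beta> + s * exp \<alpha>"
    by (rule exp_convex_combination[OF assms])
  finally show ?thesis by (simp add: persp_gap_def algebra_simps)
qed

lemma has_integral_persp_gap:
  "((\<lambda>s. height_density d s * persp_gap s) has_integral persp_gap_mean) {0..1}"
proof -
  have "((\<lambda>s. exp \<beta> * height_density d s + (exp \<alpha> - exp \<beta>) * (height_density d s * s)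
      - exp \<beta> * (height_density d s * exp (s * u))) has_integral
      exp \<beta> * 1 + (exp \<alpha> - exp \<beta>) * (1 / (real d + 1)) - exp \<beta> * (fact d / u ^ d * (exp u - exp_taylor d u)))
      {0..1}"
    by (intro has_integral_diff has_integral_add has_integral_mult_right has_integral_height_density
        has_integral_height_density_times_id has_integral_height_density_times_exp d_pos u_nz)
  moreover have "exp \<beta> * height_density d s + (exp \<alpha> - exp \<beta>) * (height_density d s * s)
      - exp \<beta> * (height_density d s * exp (s * u)) = height_density d s * persp_gap s" for s
    unfolding persp_gap_def by (simp only: exp_add) (simp add: algebra_simps)
  ultimately show ?thesis
    by (simp add: persp_gap_mean_def)
qed

lemma persp_gap_mean_nonneg: "0 \<le> persp_gap_mean"
  by (rule has_integral_nonneg[OF has_integral_persp_gap])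
     (simp add: persp_gap_nonneg height_density_nonneg)

lemma emeasure_persp_core_section:
  assumes "0 < z" "z \<le> 1"
  shows "emeasure lborel {y. (x, y, z) \<in> persp_core}
    = indicator ((\<lambda>p. z *\<^sub>R p) ` J) x * ennreal (homog mu x z - z * expc (inverse z *\<^sub>R x))"
proof -
  have "{y. (x, y, z) \<in> persp_core}
      = (if x \<in> (\<lambda>p. z *\<^sub>R p) ` J then {z * expc (inverse z *\<^sub>R x) .. homog mu x z} else {})"
    using assms by (auto simp: persp_core_def)
  then show ?thesis
    by (simp add: emeasure_lborel_Icc_ennreal)
qed

lemma nn_integral_persp_core_section:
  "(\<integral>\<^sup>+x. emeasure lborel {y. (x, y, z) \<in> persp_core} \<partial>lborel)
    = ennreal (measure lebesgue J * persp_gap_mean * z ^ (d + 1)) * indicator {0<..1} z"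
proof (cases "0 < z \<and> z \<le> 1")
  case True
  have "(\<integral>\<^sup>+x. emeasure lborel {y. (x, y, z) \<in> persp_core} \<partial>lborel)
      = (\<integral>\<^sup>+x. indicator ((\<lambda>p. z *\<^sub>R p) ` J) x * ennreal (homog mu x z - z * expc (inverse z *\<^sub>R x)) \<partial>lborel)"
    using True by (simp add: emeasure_persp_core_section)
  also have "\<dots> = ennreal (z ^ d * (measure lebesgue J * z * persp_gap_mean))"
  proof (rule nn_integral_scaled_simplex)
    show "homog mu (z *\<^sub>R w) z - z * expc (inverse z *\<^sub>R z *\<^sub>R w) = z * persp_gap (height w)" for w
      using True u_nz by (simp add: homog_mu_scaleR expc_def mu_def persp_gap_def height_def field_simps)
    show "((\<lambda>s. measure lebesgue J * height_density d s * (z * persp_gap s)) has_integral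
        measure lebesgue J * z * persp_gap_mean) {0..1}"
      using has_integral_mult_right[OF has_integral_persp_gap, of "measure lebesgue J * z"]
      by (simp add: ac_simps)
  qed (use True persp_gap_nonneg in \<open>auto simp: homog_def\<close>)
  finally show ?thesis
    using True by (simp add: algebra_simps)
next
  case False
  then have "{y. (x, y, z) \<in> persp_core} = {}" for x
    by (auto simp: persp_core_def)
  then show ?thesis
    using False by simp
qed

lemma emeasure_persp_core:
  "emeasure lborel persp_core = ennreal (measure lebesgue J * persp_gap_mean / (real d + 2))"
proof -
  have "emeasure lborel persp_core
      = (\<integral>\<^sup>+z. ennreal (measure lebesgue J * persp_gap_mean * z ^ (d + 1)) * indicator {0<..1} z \<partial>lborel)"
    by (simp add: emeasure_lborel_by_vertical_sections nn_integral_persp_core_section)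
  also have "\<dots> = (\<integral>\<^sup>+z. ennreal (measure lebesgue J * persp_gap_mean * z ^ (d + 1)) * indicator {0..1} z \<partial>lborel)"
    by (rule nn_integral_cong_AE)
       (use AE_lborel_singleton[of 0] in \<open>eventually_elim, auto simp: indicator_def\<close>)
  also have "\<dots> = ennreal (measure lebesgue J * persp_gap_mean * (1 / (real (d + 1) + 1)))"
    using persp_gap_mean_nonneg
    by (intro nn_integral_has_integral_lebesgue' has_integral_mult_right has_integral_pow_unit_interval) auto
  finally show ?thesis
    by (simp add: field_simps)
qed

lemma persp_volume_closed_form:
  "measure lebesgue J * persp_gap_mean / (real d + 2) =
    fact d * measure lebesgue J / fact (d + 2) * (exp \<alpha> + d * exp \<beta>)
    - fact d * measure lebesgue J / (d + 2) * (exp \<beta> / u ^ d) * (exp u - exp_taylor d u)"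
proof -
  have "V * (b + (a - b) / r - b * (F / U * E)) / q
      = F * V / (q * r * F) * (a + (r - 1) * b) - F * V / q * (b / U) * E"
    if "r \<noteq> 0" "q \<noteq> 0" "F \<noteq> 0" "U \<noteq> 0" for V a b F U E q r :: real
    using that by (simp add: field_simps)
  from this[of "real d + 1" "real d + 2" "fact d" "u ^ d"] show ?thesis
    using u_nz by (simp add: persp_gap_mean_def fact_add_two add.commute)
qed

lemma measure_persp_relax:
  assumes "affine hull (v ` {0..d}) = UNIV"
  shows "measure lebesgue (persp_relax expc v d) =
    fact d * measure lebesgue J / fact (d + 2) * (exp \<alpha> + d * exp \<beta>)
    - fact d * measure lebesgue J / (d + 2) * (exp \<beta> / u ^ d) * (exp u - (\<Sum>j<d. u ^ j / fact j))"
proof -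
  have "persp_relax expc v d = closure persp_core"
    by (simp add: persp_relax_def affine_interp_expc[OF assms] persp_core_def)
  then have "measure lebesgue (persp_relax expc v d) = measure lborel persp_core"
    by (simp add: measure_completion measure_def emeasure_closure_persp_core)
  also have "\<dots> = measure lebesgue J * persp_gap_mean / (real d + 2)"
    using persp_gap_mean_nonneg by (simp add: measure_def emeasure_persp_core)
  also note persp_volume_closed_form
  finally show ?thesis
    by (simp only: exp_taylor_def)
qed

definition naive_gap :: "real \<Rightarrow> real \<Rightarrow> real" where
  "naive_gap z s = z * (exp \<beta> - 1 + s * (exp \<alpha> - exp \<beta>)) - exp (z * (\<beta> + s * u)) + 1"

definition naive_section_area :: "real \<Rightarrow> real" where
  "naive_section_area z = measure lebesgue J * ((exp \<beta> - 1) * z ^ (d + 1) + z ^ d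
    + (exp \<alpha> - exp \<beta>) / (real d + 1) * z ^ (d + 1)
    - fact d / u ^ d * (exp (z * \<alpha>) - exp (z * \<beta>) * exp_taylor d (z * u)))"

definition naive_volume :: real where
  "naive_volume = measure lebesgue J * ((exp \<beta> - 1) / (real d + 2) + 1 / (real d + 1)
    + (exp \<alpha> - exp \<beta>) / (real d + 1) / (real d + 2)
    - fact d / u ^ d * ((exp \<alpha> - exp \<beta> * exp_taylor d u
        - u ^ d / (- \<beta>) ^ d * (1 - exp \<beta> * exp_taylor d (- \<beta>))) / \<alpha>))"

lemma borel_measurable_naive_gap [measurable]: "naive_gap z \<in> borel_measurable borel"
  unfolding naive_gap_def[abs_def] by measurable

lemma naive_gap_nonneg:
  assumes "0 \<le> z" "z \<le> 1" "0 \<le> s" "s \<le> 1"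
  shows "0 \<le> naive_gap z s"
proof -
  have "exp (z * (\<beta> + s * u)) = exp ((1 - z) * 0 + z * ((1 - s) * \<beta> + s * \<alpha>))"
    by (simp add: algebra_simps)
  also have "\<dots> \<le> (1 - z) * exp 0 + z * exp ((1 - s) * \<beta> + s * \<alpha>)"
    by (rule exp_convex_combination[OF assms(1,2)])
  also have "\<dots> \<le> (1 - z) + z * ((1 - s) * exp \<beta> + s * exp \<alpha>)"
    using exp_convex_combination[OF assms(3,4)] assms(1) by (simp add: mult_left_mono)
  finally show ?thesis
    by (simp add: naive_gap_def algebra_simps)
qed

lemma has_integral_naive_gap:
  assumes "z \<noteq> 0"
  shows "((\<lambda>s. measure lebesgue J * height_density d s * naive_gap z s) has_integral
    naive_section_area z / z ^ d) {0..1}"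
proof -
  let ?V = "measure lebesgue J"
  have integral: "((\<lambda>s. ?V * ((z * (exp \<beta> - 1) + 1) * height_density d s
        + z * (exp \<alpha> - exp \<beta>) * (height_density d s * s)
        - exp (z * \<beta>) * (height_density d s * exp (s * (z * u))))) has_integral
      ?V * ((z * (exp \<beta> - 1) + 1) * 1 + z * (exp \<alpha> - exp \<beta>) * (1 / (real d + 1))
        - exp (z * \<beta>) * (fact d / (z * u) ^ d * (exp (z * u) - exp_taylor d (z * u))))) {0..1}"
    using assms u_nz
    by (intro has_integral_mult_right has_integral_diff has_integral_add has_integral_height_density
        has_integral_height_density_times_id has_integral_height_density_times_exp d_pos) simp_all
  have integrand: "?V * ((z * (exp \<beta> - 1) + 1) * height_density d s
        + z * (exp \<alpha> - exp \<beta>) * (height_density d s * s)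
        - exp (z * \<beta>) * (height_density d s * exp (s * (z * u))))
      = ?V * height_density d s * naive_gap z s" for s
  proof -
    have "exp (z * (\<beta> + s * u)) = exp (z * \<beta>) * exp (s * (z * u))"
      by (simp add: exp_add[symmetric] algebra_simps)
    then show ?thesis
      by (simp add: naive_gap_def algebra_simps)
  qed
  have "exp (z * \<alpha>) = exp (z * \<beta>) * exp (z * u)"
    by (simp add: exp_add[symmetric] algebra_simps)
  then have "?V * ((z * (exp \<beta> - 1) + 1) * 1 + z * (exp \<alpha> - exp \<beta>) * (1 / (real d + 1))
        - exp (z * \<beta>) * (fact d / (z * u) ^ d * (exp (z * u) - exp_taylor d (z * u))))
      = naive_section_area z / z ^ d"
    using assms u_nz
    by (simp add: naive_section_area_def power_mult_distrib field_simps add_pos_nonneg)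
  with integral show ?thesis
    unfolding integrand by simp
qed

lemma naive_section_area_nonneg:
  assumes "0 \<le> z" "z \<le> 1"
  shows "0 \<le> naive_section_area z"
proof (cases "z = 0")
  case True
  obtain m where "d = Suc m" using d_pos by (cases d) auto
  then have "exp_taylor d 0 = 1" "(0::real) ^ d = 0" by simp_all
  then show ?thesis using True by (simp add: naive_section_area_def)
next
  case False
  have "0 \<le> naive_section_area z / z ^ d"
    using assms by (intro has_integral_nonneg[OF has_integral_naive_gap[OF False]])
      (auto intro!: mult_nonneg_nonneg naive_gap_nonneg height_density_nonneg)
  moreover have "0 < z ^ d"
    using assms False by simp
  ultimately show ?thesis
    by (auto simp: zero_le_divide_iff)
qed

lemma has_integral_naive_section_area:
  assumes "\<alpha> \<noteq> 0" "\<beta> \<noteq> 0"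
  shows "(naive_section_area has_integral naive_volume) {0..1}"
proof -
  have "(naive_section_area has_integral
      measure lebesgue J * ((exp \<beta> - 1) * (1 / (real (d + 1) + 1)) + 1 / (real d + 1)
      + (exp \<alpha> - exp \<beta>) / (real d + 1) * (1 / (real (d + 1) + 1))
      - fact d / u ^ d * ((exp \<alpha> - exp \<beta> * exp_taylor d u
        - u ^ d / (- \<beta>) ^ d * (1 - exp \<beta> * exp_taylor d (- \<beta>))) / \<alpha>))) {0..1}"
    unfolding naive_section_area_def[abs_def] using assms d_pos
    by (intro has_integral_mult_right has_integral_mult_left has_integral_diff has_integral_add
        has_integral_pow_unit_interval has_integral_exp_minus_exp_taylor) simp_all
  then show ?thesis
    by (simp add: naive_volume_def add.commute)
qed

lemma emeasure_naive_set_section: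
  assumes "0 < z" "z \<le> 1"
  shows "emeasure lborel {y. (x, y, z) \<in> naive_set}
    = indicator ((\<lambda>p. z *\<^sub>R p) ` J) x * ennreal (homog mu x z - expc x)"
proof -
  have "{y. (x, y, z) \<in> naive_set}
      = (if x \<in> (\<lambda>p. z *\<^sub>R p) ` J then {expc x .. homog mu x z} else {})"
    using assms by (auto simp: naive_set_def)
  then show ?thesis
    by (simp add: emeasure_lborel_Icc_ennreal)
qed

lemma nn_integral_naive_set_section:
  "(\<integral>\<^sup>+x. emeasure lborel {y. (x, y, z) \<in> naive_set} \<partial>lborel)
    = ennreal (naive_section_area z) * indicator {0<..1} z"
proof -
  consider "0 < z" "z \<le> 1" | "z = 0" | "z < 0 \<or> 1 < z" by linarith
  then show ?thesis
  proof cases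
    case 1
    have "(\<integral>\<^sup>+x. emeasure lborel {y. (x, y, z) \<in> naive_set} \<partial>lborel)
        = (\<integral>\<^sup>+x. indicator ((\<lambda>p. z *\<^sub>R p) ` J) x * ennreal (homog mu x z - expc x) \<partial>lborel)"
      using 1 by (simp add: emeasure_naive_set_section)
    also have "\<dots> = ennreal (z ^ d * (naive_section_area z / z ^ d))"
    proof (rule nn_integral_scaled_simplex)
      show "homog mu (z *\<^sub>R w) z - expc (z *\<^sub>R w) = naive_gap z (height w)" for w
        using u_nz
        by (simp add: homog_mu_scaleR expc_def mu_def naive_gap_def height_def inner_scaleR_right field_simps)
    qed (use 1 naive_gap_nonneg has_integral_naive_gap in \<open>auto simp: homog_def\<close>)
    finally show ?thesis
      using 1 by simp
  next
    case 2
    \<comment> \<open>At \<open>z = 0\<close> only the section over \<open>x = 0\<close> is nonempty.\<close>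
    have "AE x in lborel. emeasure lborel {y. (x, y, z) \<in> naive_set} = 0"
      using AE_lborel_singleton[of 0] by eventually_elim (auto simp: 2 naive_set_iff)
    then have "(\<integral>\<^sup>+x. emeasure lborel {y. (x, y, z) \<in> naive_set} \<partial>lborel) = 0"
      by (simp add: nn_integral_0_iff_AE)
    then show ?thesis
      using 2 by simp
  next
    case 3
    then have "{y. (x, y, z) \<in> naive_set} = {}" for x
      by (auto simp: naive_set_def)
    then show ?thesis
      using 3 by auto
  qed
qed

lemma emeasure_naive_set:
  assumes "\<alpha> \<noteq> 0" "\<beta> \<noteq> 0"
  shows "emeasure lborel naive_set = ennreal naive_volume"
proof -
  have "emeasure lborel naive_set = (\<integral>\<^sup>+z. ennreal (naive_section_area z) * indicator {0<..1} z \<partial>lborel)"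
    by (simp add: emeasure_lborel_by_vertical_sections nn_integral_naive_set_section)
  also have "\<dots> = (\<integral>\<^sup>+z. ennreal (naive_section_area z) * indicator {0..1} z \<partial>lborel)"
    by (rule nn_integral_cong_AE)
       (use AE_lborel_singleton[of 0] in \<open>eventually_elim, auto simp: indicator_def\<close>)
  also have "\<dots> = ennreal naive_volume"
    using naive_section_area_nonneg
    by (intro nn_integral_has_integral_lebesgue' has_integral_naive_section_area assms) auto
  finally show ?thesis .
qed

lemma naive_volume_closed_form:
  assumes "\<alpha> \<noteq> 0" "\<beta> \<noteq> 0"
  shows "naive_volume =
    fact d * measure lebesgue J / fact (d + 2) * (exp \<alpha> + d * exp \<beta> + 1)
    - fact d * measure lebesgue J * (exp \<beta> / (\<alpha> * u ^ d)) * (exp u - exp_taylor d u)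
    + fact d * measure lebesgue J * (exp \<beta> / (\<alpha> * (- \<beta>) ^ d)) * (exp (- \<beta>) - exp_taylor d (- \<beta>))"
proof -
  have identity: "V * ((b - 1) / q + 1 / r + (a - b) / r / q - F / U * ((X - U / W * Y) / A))
      = F * V / (q * r * F) * ((b - 1) * r + q + (a - b)) - F * V * (1 / (A * U)) * X
        + F * V * (1 / (A * W)) * Y"
    if "r \<noteq> 0" "q \<noteq> 0" "F \<noteq> 0" "U \<noteq> 0" "W \<noteq> 0" "A \<noteq> 0" for V a b F U W A X Y q r :: real
    using that by (simp add: field_simps)
  have "naive_volume = fact d * measure lebesgue J / ((real d + 2) * (real d + 1) * fact d)
        * ((exp \<beta> - 1) * (real d + 1) + (real d + 2) + (exp \<alpha> - exp \<beta>))
      - fact d * measure lebesgue J * (1 / (\<alpha> * u ^ d)) * (exp \<alpha> - exp \<beta> * exp_taylor d u)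
      + fact d * measure lebesgue J * (1 / (\<alpha> * (- \<beta>) ^ d)) * (1 - exp \<beta> * exp_taylor d (- \<beta>))"
    unfolding naive_volume_def by (rule identity) (use assms u_nz in simp_all)
  moreover have "(exp \<beta> - 1) * (real d + 1) + (real d + 2) + (exp \<alpha> - exp \<beta>) = exp \<alpha> + d * exp \<beta> + 1"
    by (simp add: algebra_simps)
  moreover have "exp \<alpha> - exp \<beta> * exp_taylor d u = exp \<beta> * (exp u - exp_taylor d u)"
    by (simp add: exp_diff right_diff_distrib)
  moreover have "1 - exp \<beta> * exp_taylor d (- \<beta>) = exp \<beta> * (exp (- \<beta>) - exp_taylor d (- \<beta>))"
    by (simp only: right_diff_distrib exp_minus_inverse)
  ultimately show ?thesis
    by (simp add: fact_add_two ac_simps)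
qed

lemma measure_naive_relax:
  assumes "affine hull (v ` {0..d}) = UNIV" "\<alpha> \<noteq> 0" "\<beta> \<noteq> 0"
  shows "measure lebesgue (naive_relax expc v d) =
    fact d * measure lebesgue J / fact (d + 2) * (exp \<alpha> + d * exp \<beta> + 1)
    - fact d * measure lebesgue J * (exp \<beta> / (\<alpha> * u ^ d)) * (exp u - (\<Sum>j<d. u ^ j / fact j))
    + fact d * measure lebesgue J * (exp \<beta> / (\<alpha> * (- \<beta>) ^ d))
      * (exp (- \<beta>) - (\<Sum>j<d. (- \<beta>) ^ j / fact j))"
proof -
  have "naive_relax expc v d = naive_set"
    by (simp add: naive_relax_def affine_interp_expc[OF assms(1)] naive_set_def)
  moreover have "0 \<le> naive_volume"
    using naive_section_area_nonneg
    by (intro has_integral_nonneg[OF has_integral_naive_section_area[OF assms(2,3)]]) auto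
  ultimately have "measure lebesgue (naive_relax expc v d) = naive_volume"
    using emeasure_naive_set[OF assms(2,3)] by (simp add: measure_completion measure_def)
  also note naive_volume_closed_form[OF assms(2,3)]
  finally show ?thesis
    by (simp only: exp_taylor_def)
qed

end

theorem theorem13:
  fixes v :: "nat \<Rightarrow> real^'n" and c :: "real^'n" and u :: real
    and f :: "real^'n \<Rightarrow> real" and d :: nat
  assumes d_def: "d = CARD('n)"
    and inj: "inj_on v {0..d}"
    and indep: "\<not> affine_dependent (v ` {0..d})"
    and orthant: "simplex_of v d \<subseteq> {x. \<forall>k. 0 \<le> x $ k} - {0}"
    and f_def: "f = (\<lambda>x. exp (c \<bullet> x) - 1)"
    and u_def: "\<forall>j\<in>{1..d}. c \<bullet> v 0 - c \<bullet> v j = u"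
    and u_nz: "u \<noteq> 0"
  shows "(measure lebesgue (persp_relax f v d) =
           fact d * measure lebesgue (simplex_of v d) / fact (d + 2)
             * (exp (c \<bullet> v 0) + d * exp (c \<bullet> v 0 - u))
         - fact d * measure lebesgue (simplex_of v d) / (d + 2)
             * (exp (c \<bullet> v 0 - u) / u ^ d) * (exp u - (\<Sum>j<d. u ^ j / fact j)))
    \<and> (c \<bullet> v 0 \<noteq> 0 \<longrightarrow> c \<bullet> v 0 - u \<noteq> 0 \<longrightarrow>
        
         measure lebesgue (naive_relax f v d) =
           fact d * measure lebesgue (simplex_of v d) / fact (d + 2)
             * (exp (c \<bullet> v 0) + d * exp (c \<bullet> v 0 - u) + 1)
         - fact d * measure lebesgue (simplex_of v d)
             * (exp (c \<bullet> v 0 - u) / ((c \<bullet> v 0) * u ^ d)) * (exp u - (\<Sum>j<d. u ^ j / fact j))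
         + fact d * measure lebesgue (simplex_of v d)
             * (exp (c \<bullet> v 0 - u) / ((c \<bullet> v 0) * (- (c \<bullet> v 0 - u)) ^ d))
             * (exp (- (c \<bullet> v 0 - u)) - (\<Sum>j<d. (- (c \<bullet> v 0 - u)) ^ j / fact j)))"
proof -
  interpret apex_simplex v c u d
    using d_def u_def u_nz by unfold_locales
  have hull: "affine hull (v ` {0..d}) = UNIV"
    by (rule affine_hull_simplex_vertices[OF d_def inj indep])
  have "f = expc"
    by (simp add: f_def fun_eq_iff expc_def)
  then show ?thesis
    using measure_persp_relax[OF hull] measure_naive_relax[OF hull] by simp
qed

end
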